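(* Let $S=\mathcal{M}[K,G,\Lambda;P]$ be a Rees matrix semigroup. If $|K|>1$ or $|\Lambda|>1$, then $\sigma_s(S)=2$. If $|K|=|\Lambda|=1$, then $S$ is a group.
   Context: For a group $G$, nonempty sets $K,\Lambda$ and a $\Lambda\times K$ matrix $P=(p_{\lambda,\kappa})$ with entries in $G$, the Rees matrix semigroup $\mathcal{M}[K,G,\Lambda;P]$ is the set $K\times G\times\Lambda$ with product $(\kappa,g,\lambda)(\mu,h,\nu)=(\kappa,gp_{\lambda,\mu}h,\nu)$. $\sigma_s(S)$ is the least positive integer $n$ such that $S$ is the union of $n$ proper subsemigroups, or $\infty$ if none exists. *)

theory Defs
  imports "HOL-Algebra.Group" "HOL-Library.Extended_Nat"
begin

text \<open>Rees matrix semigroup M[K,G,L;P]: carrier K x G x L, with the sandwich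
  matrix P indexed by (lambda, kappa), i.e. P :: 'l => 'k => 'g.\<close>

definition rees_carrier :: "'k set \<Rightarrow> ('g, 'b) monoid_scheme \<Rightarrow> 'l set \<Rightarrow> ('k \<times> 'g \<times> 'l) set" where
  "rees_carrier K G L = K \<times> carrier G \<times> L"

definition rees_mult :: "('g, 'b) monoid_scheme \<Rightarrow> ('l \<Rightarrow> 'k \<Rightarrow> 'g)
    \<Rightarrow> ('k \<times> 'g \<times> 'l) \<Rightarrow> ('k \<times> 'g \<times> 'l) \<Rightarrow> ('k \<times> 'g \<times> 'l)" where
  "rees_mult G P x y =
     (case x of (k1, g, l1) \<Rightarrow> (case y of (k2, h, l2) \<Rightarrow> (k1, g \<otimes>\<^bsub>G\<^esub> P l1 k2 \<otimes>\<^bsub>G\<^esub> h, l2)))"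

definition subsemigroup_of :: "'a set \<Rightarrow> ('a \<Rightarrow> 'a \<Rightarrow> 'a) \<Rightarrow> 'a set \<Rightarrow> bool" where
  "subsemigroup_of S f T \<longleftrightarrow> T \<noteq> {} \<and> T \<subseteq> S \<and> (\<forall>x\<in>T. \<forall>y\<in>T. f x y \<in> T)"

definition covered_by_proper_subsemigroups :: "'a set \<Rightarrow> ('a \<Rightarrow> 'a \<Rightarrow> 'a) \<Rightarrow> nat \<Rightarrow> bool" where
  "covered_by_proper_subsemigroups S f n \<longleftrightarrow>
     (\<exists>F. finite F \<and> card F = n \<and> (\<forall>T\<in>F. subsemigroup_of S f T \<and> T \<subset> S) \<and> \<Union>F = S)"

definition sigma_s :: "'a set \<Rightarrow> ('a \<Rightarrow> 'a \<Rightarrow> 'a) \<Rightarrow> enat" where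
  "sigma_s S f =
     (if \<exists>n. 0 < n \<and> covered_by_proper_subsemigroups S f n
      then enat (LEAST n. 0 < n \<and> covered_by_proper_subsemigroups S f n)
      else \<infinity>)"

end

theory Submission
  imports Defs
begin

text \<open>A product in S only remembers the first coordinate of its left factor and the
  last coordinate of its right factor, so every rectangle A \<times> G \<times> B is a
  subsemigroup. If K or \<Lambda> has two elements, splitting it into a singleton and its
  complement therefore covers S by two proper subsemigroups, and one proper
  subsemigroup never suffices. If K = {k} and \<Lambda> = {l}, then S is G with the
  sandwich product g h = g p h for p = P l k, a group with identity the inverse of p.\<close>

lemma rees_mult_simp [simp]:
  "rees_mult G P (k1, g, l1) (k2, h, l2) = (k1, g \<otimes>\<^bsub>G\<^esub> P l1 k2 \<otimes>\<^bsub>G\<^esub> h, l2)"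
  by (simp add: rees_mult_def)

lemma subsemigroup_of_rees_rectangle:
  assumes "group G" and "\<forall>l\<in>L. \<forall>k\<in>K. P l k \<in> carrier G"
    and "A \<subseteq> K" "B \<subseteq> L" "A \<noteq> {}" "B \<noteq> {}"
  shows "subsemigroup_of (rees_carrier K G L) (rees_mult G P) (A \<times> carrier G \<times> B)"
proof -
  interpret G: group G by fact
  have "rees_mult G P x y \<in> A \<times> carrier G \<times> B"
    if "x \<in> A \<times> carrier G \<times> B" "y \<in> A \<times> carrier G \<times> B" for x y
    using that assms(2-4) by (auto 0 3)
  then show ?thesis
    using assms(3-6) unfolding subsemigroup_of_def rees_carrier_def by blast
qed

lemma not_covered_by_one_proper_subsemigroup:
  "\<not> covered_by_proper_subsemigroups S f 1"
  by (auto simp: covered_by_proper_subsemigroups_def card_Suc_eq)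

lemma sigma_s_eq_2I:
  assumes "subsemigroup_of S f A" "A \<subset> S"
    and "subsemigroup_of S f B" "B \<subset> S"
    and "A \<union> B = S"
  shows "sigma_s S f = 2"
proof -
  have "A \<noteq> B" using assms(2,5) by blast
  then have covered: "covered_by_proper_subsemigroups S f 2"
    unfolding covered_by_proper_subsemigroups_def
    by (intro exI[of _ "{A, B}"]) (use assms in auto)
  have "(LEAST n. 0 < n \<and> covered_by_proper_subsemigroups S f n) = 2"
  proof (rule Least_equality)
    fix n :: nat assume "0 < n \<and> covered_by_proper_subsemigroups S f n"
    with not_covered_by_one_proper_subsemigroup show "2 \<le> n"
      by (metis One_nat_def Suc_1 Suc_leI le_neq_implies_less)
  qed (use covered in simp)
  with covered show ?thesis
    unfolding sigma_s_def by (metis enat_numeral zero_less_numeral)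
qed

lemma rees_rectangle_psubset:
  assumes "carrier G \<noteq> {}" "A \<subseteq> K" "B \<subseteq> L" "A \<noteq> {}" "B \<noteq> {}" "(A, B) \<noteq> (K, L)"
  shows "A \<times> carrier G \<times> B \<subset> rees_carrier K G L"
  using assms unfolding rees_carrier_def by (auto simp: times_eq_iff)

lemma sigma_s_rees_eq_2I:
  assumes "group G" and "\<forall>l\<in>L. \<forall>k\<in>K. P l k \<in> carrier G"
    and "A \<subseteq> K" "B \<subseteq> L" "A \<noteq> {}" "B \<noteq> {}" "(A, B) \<noteq> (K, L)"
    and "A' \<subseteq> K" "B' \<subseteq> L" "A' \<noteq> {}" "B' \<noteq> {}" "(A', B') \<noteq> (K, L)"
    and "A \<times> carrier G \<times> B \<union> A' \<times> carrier G \<times> B' = rees_carrier K G L"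
  shows "sigma_s (rees_carrier K G L) (rees_mult G P) = 2"
proof (rule sigma_s_eq_2I[OF _ _ _ _ assms(13)])
  have "carrier G \<noteq> {}"
    using group.subgroup_self[OF assms(1)] subgroup.one_closed by blast
  then show "A \<times> carrier G \<times> B \<subset> rees_carrier K G L"
    and "A' \<times> carrier G \<times> B' \<subset> rees_carrier K G L"
    using assms by (simp_all add: rees_rectangle_psubset)
qed (use assms in \<open>simp_all add: subsemigroup_of_rees_rectangle\<close>)

lemma group_rees_singleton:
  assumes "group G" and "P l k \<in> carrier G"
  shows "group \<lparr>carrier = rees_carrier {k} G {l}, mult = rees_mult G P,
                 one = (k, inv\<^bsub>G\<^esub> P l k, l)\<rparr>" (is "group ?S")
proof -
  interpret G: group G by fact
  define p where "p = P l k"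
  have p: "p \<in> carrier G" using assms(2) by (simp add: p_def)
  have carrier: "x \<in> rees_carrier {k} G {l} \<longleftrightarrow> (\<exists>g\<in>carrier G. x = (k, g, l))" for x
    by (auto simp: rees_carrier_def)
  have mult: "(k, g, l) \<otimes>\<^bsub>?S\<^esub> (k, h, l) = (k, g \<otimes>\<^bsub>G\<^esub> p \<otimes>\<^bsub>G\<^esub> h, l)" for g h
    by (simp add: p_def)
  show ?thesis
  proof (rule groupI)
    fix x assume "x \<in> carrier ?S"
    then obtain g where g: "g \<in> carrier G" "x = (k, g, l)" by (auto simp: carrier)
    let ?y = "(k, inv\<^bsub>G\<^esub> p \<otimes>\<^bsub>G\<^esub> inv\<^bsub>G\<^esub> g \<otimes>\<^bsub>G\<^esub> inv\<^bsub>G\<^esub> p, l)"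
    have "?y \<otimes>\<^bsub>?S\<^esub> x = \<one>\<^bsub>?S\<^esub>" and "?y \<in> carrier ?S"
      using p g by (simp_all add: mult carrier G.m_assoc p_def)
    then show "\<exists>y\<in>carrier ?S. y \<otimes>\<^bsub>?S\<^esub> x = \<one>\<^bsub>?S\<^esub>" by blast
  qed (use p in \<open>auto simp: carrier mult G.m_assoc p_def[symmetric]\<close>)
qed

theorem mainTheorem8:
  fixes K :: "'k set" and L :: "'l set" and G :: "('g, 'b) monoid_scheme"
    and P :: "'l \<Rightarrow> 'k \<Rightarrow> 'g"
  assumes "group G"
    and "K \<noteq> {}" and "L \<noteq> {}"
    and "\<forall>l\<in>L. \<forall>k\<in>K. P l k \<in> carrier G"
  shows "((\<exists>a\<in>K. \<exists>b\<in>K. a \<noteq> b) \<or> (\<exists>a\<in>L. \<exists>b\<in>L. a \<noteq> b)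
            \<longrightarrow> sigma_s (rees_carrier K G L) (rees_mult G P) = 2)
       \<and> ((\<exists>k. K = {k}) \<and> (\<exists>l. L = {l})
            \<longrightarrow> (\<exists>e. group \<lparr>carrier = rees_carrier K G L, mult = rees_mult G P, one = e\<rparr>))"
proof (intro conjI impI)
  assume "(\<exists>a\<in>K. \<exists>b\<in>K. a \<noteq> b) \<or> (\<exists>a\<in>L. \<exists>b\<in>L. a \<noteq> b)"
  then show "sigma_s (rees_carrier K G L) (rees_mult G P) = 2"
  proof (elim disjE bexE)
    fix a b assume "a \<in> K" "b \<in> K" "a \<noteq> b"
    show ?thesis
    proof (rule sigma_s_rees_eq_2I[OF assms(1,4),
          where A = "{a}" and A' = "K - {a}" and B = L and B' = L])
      show "{a} \<times> carrier G \<times> L \<union> (K - {a}) \<times> carrier G \<times> L = rees_carrier K G L"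
        using \<open>a \<in> K\<close> by (auto simp: rees_carrier_def)
    qed (use \<open>a \<in> K\<close> \<open>b \<in> K\<close> \<open>a \<noteq> b\<close> assms(3) in auto)
  next
    fix a b assume "a \<in> L" "b \<in> L" "a \<noteq> b"
    show ?thesis
    proof (rule sigma_s_rees_eq_2I[OF assms(1,4),
          where A = K and A' = K and B = "{a}" and B' = "L - {a}"])
      show "K \<times> carrier G \<times> {a} \<union> K \<times> carrier G \<times> (L - {a}) = rees_carrier K G L"
        using \<open>a \<in> L\<close> by (auto simp: rees_carrier_def)
    qed (use \<open>a \<in> L\<close> \<open>b \<in> L\<close> \<open>a \<noteq> b\<close> assms(2) in auto)
  qed
next
  assume "(\<exists>k. K = {k}) \<and> (\<exists>l. L = {l})"
  then obtain k l where "K = {k}" "L = {l}" by blast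
  with assms(4) have "P l k \<in> carrier G" by simp
  from group_rees_singleton[where P = P and l = l and k = k, OF assms(1) this]
  show "\<exists>e. group \<lparr>carrier = rees_carrier K G L, mult = rees_mult G P, one = e\<rparr>"
    unfolding \<open>K = {k}\<close> \<open>L = {l}\<close> by (rule exI)
qed

end
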